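(* Let $X$ and $Y$ be metric spaces and let $A(X)\subseteq C(X)$ and $A(Y)\subseteq C(Y)$ be adequate subspaces. If $h:\mathcal{A}X\to\mathcal{A}Y$ is a homeomorphism and $x_0\in X$, then there is a sequence $(y_n)$ in $Y$ that converges to $h(x_0)$ in $\mathcal{A}Y$.
   Context: All functions are real-valued. $A(X)\subseteq C(X)$ separates points from closed sets if for every $x\in X$ and closed $F\not\ni x$ there is $f\in A(X)$ with $f(x)=1$, $f=0$ on $F$. $A(X)$ is adequate if (a) it separates points from closed sets and contains the constants; (b) there is a continuous nondecreasing $g:\mathbb{R}\to\mathbb{R}$ with $g(t)=0$ for $t\le0$, $g(t)=1$ for $t\ge1$, and $g\circ f\in A(X)$ for all $f\in A(X)$; (c) every $f\in A(X)$ is a difference of two nonnegative elements of $A(X)$. The $A(X)$-compactification $\mathcal{A}X$ is the closure of $i(X)$ in $[-\infty,\infty]^{A(X)}$ (product of order topologies), where $i(x)(\varphi)=\varphi(x)$ is a homeomorphic embedding; $X$ is identified with $i(X)\subseteq\mathcal{A}X$. $\mathcal{A}Y$ is defined analogously from $A(Y)$. *)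

theory Defs
  imports "HOL-Analysis.Analysis" "HOL-Library.Extended_Real"
begin

text \<open>A metric space X is modelled as a type of class metric_space (X = UNIV).
  C(X) is the set of real-valued continuous functions on X.\<close>

definition Cfun :: "('a::metric_space \<Rightarrow> real) set" where
  "Cfun = {f. continuous_on UNIV f}"

definition lin_subspace :: "('a \<Rightarrow> real) set \<Rightarrow> bool" where
  "lin_subspace A \<longleftrightarrow> (\<lambda>_. 0) \<in> A \<and> (\<forall>f\<in>A. \<forall>g\<in>A. (\<lambda>x. f x + g x) \<in> A)
     \<and> (\<forall>c. \<forall>f\<in>A. (\<lambda>x. c * f x) \<in> A)"

definition separates_points_closed :: "('a::metric_space \<Rightarrow> real) set \<Rightarrow> bool" where
  "separates_points_closed A \<longleftrightarrow>
     (\<forall>x F. closed F \<and> x \<notin> F \<longrightarrow> (\<exists>f\<in>A. f x = 1 \<and> (\<forall>y\<in>F. f y = 0)))"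

definition adequate :: "('a::metric_space \<Rightarrow> real) set \<Rightarrow> bool" where
  "adequate A \<longleftrightarrow>
     separates_points_closed A \<and> (\<forall>c. (\<lambda>_. c) \<in> A) \<and>
     (\<exists>g::real \<Rightarrow> real. continuous_on UNIV g \<and> mono g \<and>
        (\<forall>t\<le>0. g t = 0) \<and> (\<forall>t\<ge>1. g t = 1) \<and> (\<forall>f\<in>A. g \<circ> f \<in> A)) \<and>
     (\<forall>f\<in>A. \<exists>u\<in>A. \<exists>v\<in>A. (\<forall>x. 0 \<le> u x) \<and> (\<forall>x. 0 \<le> v x) \<and> f = (\<lambda>x. u x - v x))"

text \<open>The product space [-\<infinity>,\<infinity>]^A, each factor with its order topology
  (the standard topology on ereal is its order topology).\<close>
definition cube :: "('a \<Rightarrow> real) set \<Rightarrow> (('a \<Rightarrow> real) \<Rightarrow> ereal) topology" where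
  "cube A = product_topology (\<lambda>_. (euclidean :: ereal topology)) A"

definition evalmap :: "('a \<Rightarrow> real) set \<Rightarrow> 'a \<Rightarrow> (('a \<Rightarrow> real) \<Rightarrow> ereal)" where
  "evalmap A x = restrict (\<lambda>\<phi>. ereal (\<phi> x)) A"

definition cpt_set :: "('a \<Rightarrow> real) set \<Rightarrow> (('a \<Rightarrow> real) \<Rightarrow> ereal) set" where
  "cpt_set A = (cube A) closure_of (evalmap A ` UNIV)"

definition cpt :: "('a \<Rightarrow> real) set \<Rightarrow> (('a \<Rightarrow> real) \<Rightarrow> ereal) topology" where
  "cpt A = subtopology (cube A) (cpt_set A)"

end

theory Submission
  imports Defs
begin

text \<open>Since X is metric, the separation property yields functions f_m in A(X) with
  f_m(x0) = 1 that vanish off the ball of radius 1/(m+1) about x0. The closed sets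
  K_n = {p. p(f_m) \<ge> 1/2 for all m \<le> n} of AX are neighbourhoods of x0, decrease, and
  meet only in x0, so in the compact space AX every sequence p_n \<in> K_n converges to x0.
  As Y is dense in AY, we may pick y_n in the open set h(U_n), where U_n \<subseteq> K_n is an open
  neighbourhood of x0; then h\<inverse>(y_n) \<in> K_n tends to x0, and by continuity y_n tends to h(x0).\<close>

lemma topspace_cube: "topspace (cube A) = PiE A (\<lambda>_. UNIV)"
  unfolding cube_def by (simp add: topspace_product_topology)

lemma cpt_set_subset_topspace_cube: "cpt_set A \<subseteq> topspace (cube A)"
  unfolding cpt_set_def by (rule closure_of_subset_topspace)

lemma topspace_cpt: "topspace (cpt A) = cpt_set A"
  unfolding cpt_def using cpt_set_subset_topspace_cube by auto

lemma evalmap_in_cpt_set: "evalmap A x \<in> cpt_set A"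
proof -
  have "evalmap A ` UNIV \<subseteq> topspace (cube A)"
    unfolding topspace_cube evalmap_def by auto
  then show ?thesis unfolding cpt_set_def using closure_of_subset by blast
qed

lemma continuous_map_cube_projection:
  "\<phi> \<in> A \<Longrightarrow> continuous_map (cube A) euclidean (\<lambda>p. p \<phi>)"
  unfolding cube_def by (rule continuous_map_product_projection)

lemma continuous_map_cpt_projection:
  "\<phi> \<in> A \<Longrightarrow> continuous_map (cpt A) euclidean (\<lambda>p. p \<phi>)"
  unfolding cpt_def by (intro continuous_map_from_subtopology continuous_map_cube_projection)

lemma compact_space_cpt: "compact_space (cpt A)"
proof -
  have "compact_space (euclidean :: ereal topology)"
    by (simp add: compact_space_def compact_UNIV)
  then have "compact_space (cube A)"
    unfolding cube_def by (simp add: compact_space_product_topology)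
  moreover have "closedin (cube A) (cpt_set A)"
    unfolding cpt_set_def by (rule closedin_closure_of)
  ultimately show ?thesis
    unfolding cpt_def by (intro compact_space_subtopology closedin_compact_space)
qed

lemma openin_cpt_meets_evalmap:
  assumes "openin (cpt A) U" "U \<noteq> {}"
  shows "\<exists>y. evalmap A y \<in> U"
proof -
  obtain T where T: "openin (cube A) T" "U = T \<inter> cpt_set A"
    using assms(1) unfolding cpt_def openin_subtopology by auto
  obtain p where "p \<in> T" "p \<in> cube A closure_of (evalmap A ` UNIV)"
    using assms(2) T(2) unfolding cpt_set_def by auto
  then obtain y where "evalmap A y \<in> T"
    using T(1) unfolding in_closure_of by auto
  then show ?thesis using T(2) evalmap_in_cpt_set[of A y] by auto
qed

lemma cpt_coordinate_in_closure_values: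
  assumes "p \<in> cpt_set A" "\<phi> \<in> A" "\<psi> \<in> A" "p \<psi> \<in> S" "open S"
  shows "p \<phi> \<in> closure ((\<lambda>x. ereal (\<phi> x)) ` {x. ereal (\<psi> x) \<in> S})"
  unfolding euclidean_closure_of [symmetric] in_closure_of
proof (intro conjI allI impI)
  fix T assume T: "p \<phi> \<in> T \<and> openin euclidean T"
  define N where "N = {q \<in> topspace (cube A). q \<psi> \<in> S} \<inter> {q \<in> topspace (cube A). q \<phi> \<in> T}"
  have "openin (cube A) N"
    unfolding N_def using assms(2,3,5) T
    by (intro openin_Int openin_continuous_map_preimage[OF continuous_map_cube_projection]) simp_all
  moreover have "p \<in> N"
    unfolding N_def using assms(1,4) T cpt_set_subset_topspace_cube by blast
  ultimately obtain q where "q \<in> evalmap A ` UNIV" "q \<in> N"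
    using assms(1) unfolding cpt_set_def in_closure_of by blast
  then obtain x where "evalmap A x \<in> N" by blast
  then have "ereal (\<psi> x) \<in> S" "ereal (\<phi> x) \<in> T"
    using assms(2,3) by (simp_all add: N_def evalmap_def)
  then show "\<exists>z. z \<in> (\<lambda>x. ereal (\<phi> x)) ` {x. ereal (\<psi> x) \<in> S} \<and> z \<in> T"
    by blast
qed simp

lemma ereal_eq_if_within_every_eps:
  fixes p :: ereal
  assumes "\<And>e. e > 0 \<Longrightarrow> p \<in> {ereal (c - e)..ereal (c + e)}"
  shows "p = ereal c"
proof (rule antisym)
  show "p \<le> ereal c"
  proof (rule ereal_le_epsilon2)
    fix e :: real assume "e > 0"
    then have "p \<le> ereal (c + e)" using assms by (simp only: atLeastAtMost_iff)
    then show "p \<le> ereal c + ereal e" by simp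
  qed
  show "ereal c \<le> p"
  proof (rule ereal_le_epsilon2)
    fix e :: real assume "e > 0"
    then have "ereal (c - e) \<le> p" using assms by (simp only: atLeastAtMost_iff)
    then show "ereal c \<le> p + ereal e"
      by (cases p) auto
  qed
qed

lemma bump_functions_at:
  fixes A :: "('a::metric_space \<Rightarrow> real) set"
  assumes "separates_points_closed A"
  obtains f where "\<And>m. f m \<in> A" "\<And>m. f m x0 = 1"
    "\<And>m y. y \<notin> ball x0 (1 / Suc m) \<Longrightarrow> f m y = 0"
proof -
  have "\<exists>f\<in>A. f x0 = 1 \<and> (\<forall>y\<in>- ball x0 (1 / Suc m). f y = 0)" for m :: nat
    by (rule assms[unfolded separates_points_closed_def, rule_format]) auto
  then obtain f where f: "\<And>m. f m \<in> A \<and> f m x0 = 1 \<and> (\<forall>y\<in>- ball x0 (1 / Suc m). f m y = 0)"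
    by metis
  show thesis
  proof (rule that)
    show "f m \<in> A" "f m x0 = 1" for m using f by blast+
    show "f m y = 0" if "y \<notin> ball x0 (1 / Suc m)" for m y using f that by blast
  qed
qed

lemma cpt_eq_evalmap_if_bumps_large:
  fixes A :: "('a::metric_space \<Rightarrow> real) set"
  assumes "A \<subseteq> Cfun" "p \<in> cpt_set A" "\<And>m. f m \<in> A"
    and "\<And>m y. y \<notin> ball x0 (1 / Suc m) \<Longrightarrow> f m y = 0"
    and "\<And>m. p (f m) \<ge> ereal (1/2)"
  shows "p = evalmap A x0"
proof -
  have coordinate: "p \<phi> = ereal (\<phi> x0)" if "\<phi> \<in> A" for \<phi>
  proof (rule ereal_eq_if_within_every_eps)
    fix e :: real assume "e > 0"
    have "continuous_on UNIV \<phi>" using assms(1) \<open>\<phi> \<in> A\<close> unfolding Cfun_def by auto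
    then obtain d where "d > 0" and d: "\<And>x. dist x x0 < d \<Longrightarrow> dist (\<phi> x) (\<phi> x0) < e"
      using \<open>e > 0\<close> unfolding continuous_on_iff by (metis UNIV_I)
    then obtain m :: nat where m: "1 / Suc m < d"
      by (metis nat_approx_posE)
    have "\<phi> x \<in> {\<phi> x0 - e..\<phi> x0 + e}" if "1/4 < f m x" for x
    proof -
      have "f m x \<noteq> 0" using that by simp
      then have "x \<in> ball x0 (1 / Suc m)" using assms(4) by blast
      then have "dist x x0 < d" using m by (simp add: dist_commute)
      then have "\<bar>\<phi> x - \<phi> x0\<bar> < e" using d by (simp add: dist_real_def)
      then show ?thesis by auto
    qed
    then have near_x0: "(\<lambda>x. ereal (\<phi> x)) ` {x. ereal (f m x) \<in> {ereal (1/4)<..}}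
          \<subseteq> {ereal (\<phi> x0 - e)..ereal (\<phi> x0 + e)}"
      by auto
    have "ereal (1/4) < p (f m)"
    proof -
      have "ereal (1/4) < ereal (1/2)" by simp
      also have "\<dots> \<le> p (f m)" by (rule assms(5))
      finally show ?thesis .
    qed
    then have "p \<phi> \<in> closure ((\<lambda>x. ereal (\<phi> x)) ` {x. ereal (f m x) \<in> {ereal (1/4)<..}})"
      by (intro cpt_coordinate_in_closure_values[OF assms(2) \<open>\<phi> \<in> A\<close> assms(3)]) auto
    then show "p \<phi> \<in> {ereal (\<phi> x0 - e)..ereal (\<phi> x0 + e)}"
      using closure_minimal[OF near_x0 closed_atLeastAtMost] by blast
  qed
  have p_extensional: "p \<in> PiE A (\<lambda>_. UNIV)"
    using assms(2) cpt_set_subset_topspace_cube unfolding topspace_cube by blast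
  show ?thesis
  proof
    fix \<phi>
    show "p \<phi> = evalmap A x0 \<phi>"
      using coordinate PiE_arb[OF p_extensional] by (cases "\<phi> \<in> A") (simp_all add: evalmap_def)
  qed
qed

lemma evalmap_closed_nbhd_nest:
  fixes A :: "('a::metric_space \<Rightarrow> real) set"
  assumes "A \<subseteq> Cfun" "separates_points_closed A"
  obtains U K where "\<And>n. openin (cpt A) (U n)" "\<And>n. evalmap A x0 \<in> U n"
    "\<And>n. closedin (cpt A) (K n)" "decseq K" "\<And>n. U n \<subseteq> K n"
    "(\<Inter>n. K n) \<subseteq> {evalmap A x0}"
proof -
  obtain f where fA: "\<And>m. f m \<in> A" and f1: "\<And>m. f m x0 = 1"
    and f0: "\<And>m y. y \<notin> ball x0 (1 / Suc m) \<Longrightarrow> f m y = 0"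
    using bump_functions_at[OF assms(2)] by metis
  define U where "U n = (\<Inter>m\<le>n. {p \<in> topspace (cpt A). p (f m) \<in> {ereal (1/2)<..}})" for n
  define K where "K n = (\<Inter>m\<le>n. {p \<in> topspace (cpt A). p (f m) \<in> {ereal (1/2)..}})" for n
  show thesis
  proof (rule that)
    show "openin (cpt A) (U n)" for n
      unfolding U_def by (intro openin_INT2 openin_continuous_map_preimage
          [OF continuous_map_cpt_projection[OF fA]]) auto
    show "closedin (cpt A) (K n)" for n
      unfolding K_def by (intro closedin_INT closedin_continuous_map_preimage
          [OF continuous_map_cpt_projection[OF fA]]) auto
    show "evalmap A x0 \<in> U n" for n
      using evalmap_in_cpt_set[of A x0] fA f1
      unfolding U_def topspace_cpt evalmap_def by (auto simp: one_ereal_def)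
    show "decseq K"
      unfolding decseq_def K_def by auto
    show "U n \<subseteq> K n" for n
      unfolding U_def K_def by (auto intro: less_imp_le)
    show "(\<Inter>n. K n) \<subseteq> {evalmap A x0}"
    proof
      fix p assume "p \<in> (\<Inter>n. K n)"
      then have "p \<in> cpt_set A" "\<And>m. p (f m) \<ge> ereal (1/2)"
        unfolding K_def topspace_cpt by auto
      then show "p \<in> {evalmap A x0}"
        using cpt_eq_evalmap_if_bumps_large[OF assms(1) _ fA f0] by simp
    qed
  qed
qed

lemma limitin_decseq_closedin_Inter:
  assumes "compact_space X" "\<And>n. closedin X (K n)" "decseq K" "(\<Inter>n. K n) \<subseteq> {a}"
    "a \<in> topspace X" "\<And>n. p n \<in> K n"
  shows "limitin X p a sequentially"
  unfolding limitin_sequentially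
proof (intro conjI allI impI)
  show "a \<in> topspace X" by fact
  fix W assume W: "openin X W \<and> a \<in> W"
  have "\<exists>N. K N \<subseteq> W"
  proof (rule ccontr)
    assume "\<nexists>N. K N \<subseteq> W"
    then have "(\<Inter>n. K n - W) \<noteq> {}"
    proof (intro compact_space_imp_nest[OF assms(1)])
      show "closedin X (K n - W)" for n using assms(2) W by (simp add: closedin_diff)
      show "decseq (\<lambda>n. K n - W)" using assms(3) unfolding decseq_def by blast
    qed blast
    then show False using assms(4) W by blast
  qed
  then obtain N where "K N \<subseteq> W" by blast
  then show "\<exists>N. \<forall>n\<ge>N. p n \<in> W"
    using assms(3,6) unfolding decseq_def by blast
qed

lemma limitin_homeomorphic_image_of_closed_nest:
  assumes "compact_space X" "homeomorphic_map X Y h"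
    and U: "\<And>n. openin X (U n)" "\<And>n. a \<in> U n"
    and K: "\<And>n. closedin X (K n)" "decseq K" "(\<Inter>n. K n) \<subseteq> {a}"
    and UK: "\<And>n. U n \<subseteq> K n"
    and dense: "\<And>V. openin Y V \<Longrightarrow> V \<noteq> {} \<Longrightarrow> \<exists>y. e y \<in> V"
  shows "\<exists>y. limitin Y (\<lambda>n. e (y n)) (h a) sequentially"
proof -
  obtain g where "homeomorphic_maps X Y h g"
    using assms(2) by (auto simp: homeomorphic_map_maps)
  then have h: "continuous_map X Y h"
    and g_h: "\<And>p. p \<in> topspace X \<Longrightarrow> g (h p) = p"
    and h_g: "\<And>q. q \<in> topspace Y \<Longrightarrow> h (g q) = q"
    by (auto simp: homeomorphic_maps_def)
  have "\<exists>y. e y \<in> h ` U n" for n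
    using U homeomorphic_map_openness[OF assms(2) openin_subset[OF U(1)]]
    by (intro dense) auto
  then obtain y where y: "\<And>n. e (y n) \<in> h ` U n" by metis
  have "g (e (y n)) \<in> K n" for n
  proof -
    obtain p where "p \<in> U n" "e (y n) = h p" using y[of n] by blast
    moreover have "p \<in> topspace X" using \<open>p \<in> U n\<close> openin_subset[OF U(1)] by blast
    ultimately show ?thesis using g_h UK by auto
  qed
  then have "limitin X (\<lambda>n. g (e (y n))) a sequentially"
    using U(2)[of 0] openin_subset[OF U(1)[of 0]]
    by (intro limitin_decseq_closedin_Inter[OF assms(1) K]) auto
  then have "limitin Y (\<lambda>n. h (g (e (y n)))) (h a) sequentially"
    using continuous_map_limit[OF h] unfolding o_def by blast
  moreover have "h (g (e (y n))) = e (y n)" for n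
    using h_g y[of n] openin_subset[OF U(1)] continuous_map_image_subset_topspace[OF h] by blast
  ultimately show ?thesis by auto
qed

theorem proposition4p2:
  fixes AX :: "('a::metric_space \<Rightarrow> real) set"
    and AY :: "('b::metric_space \<Rightarrow> real) set"
    and h :: "(('a \<Rightarrow> real) \<Rightarrow> ereal) \<Rightarrow> (('b \<Rightarrow> real) \<Rightarrow> ereal)"
    and x0 :: 'a
  assumes "AX \<subseteq> Cfun" "lin_subspace AX" "adequate AX"
    and "AY \<subseteq> Cfun" "lin_subspace AY" "adequate AY"
    and "homeomorphic_map (cpt AX) (cpt AY) h"
  shows "\<exists>y :: nat \<Rightarrow> 'b. limitin (cpt AY) (\<lambda>n. evalmap AY (y n)) (h (evalmap AX x0)) sequentially"
proof -
  have "separates_points_closed AX" using assms(3) unfolding adequate_def by blast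
  then obtain U K where "\<And>n. openin (cpt AX) (U n)" "\<And>n. evalmap AX x0 \<in> U n"
    "\<And>n. closedin (cpt AX) (K n)" "decseq K" "\<And>n. U n \<subseteq> K n"
    "(\<Inter>n. K n) \<subseteq> {evalmap AX x0}"
    using evalmap_closed_nbhd_nest[OF assms(1)] by blast
  then show ?thesis
    using limitin_homeomorphic_image_of_closed_nest[OF compact_space_cpt assms(7)]
      openin_cpt_meets_evalmap by blast
qed

end
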